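(* Let $n,m,k$ be positive integers with $k\mid n$, let $p\in(0,1/2)$, and let $\mu_1,\dots,\mu_k\in\{0,1\}^m$ be fixed ground-truth mindsets. Let $V=V_1\sqcup\dots\sqcup V_k$ be a population with $|V_i|=n/k$, where every person $v\in V_i$ answers question $s\in\{1,\dots,m\}$ with $v(s)=\mu_i(s)$ with probability $1-p$ and $v(s)=1-\mu_i(s)$ with probability $p$, independently across persons and questions. Let $\mathcal P$ be the set of $m$ cuts $\{A_s^0,A_s^1\}$, $s=1,\dots,m$, where $A_s^y=\{v\in V: v(s)=y\}$. Let $a\in\mathbb N$ be the agreement parameter, and assume $p<1/(k+3)$ and $a\in\bigl(pn,\,(1-3p)n/k\bigr)$. Then: (1) The probability that at least one of the mindsets $\mu_i$ does not induce a $\mathcal P$-tangle is at most $k\,m\,\exp\!\bigl(-2n(ka/n-1+3p)^2/(9k)\bigr)$. (2) If the mindsets $\mu_1,\dots,\mu_k$ satisfy the non-degeneracy assumption, then the probability that there exists a $\mathcal P$-tangle which is not equal to any of $\mu_1,\dots,\mu_k$ is at most $k\,m\,\exp\!\bigl(-2n(a/n-p)^2/k\bigr)$. Both probabilities are over the random answers of the persons (the mindsets being fixed).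
   Context: An orientation of $\mathcal P$ chooses one side of every cut; it is identified with a vector $\tau\in\{0,1\}^m$ by choosing the side $A_s^{\tau(s)}$ of the cut for question $s$. For the agreement parameter $a$, an orientation $O$ is a $\mathcal P$-tangle (is consistent) if for all (not necessarily distinct) chosen sides $A,B,C\in O$ we have $|A\cap B\cap C|\ge a$. A mindset $\mu_i$ induces a tangle if the orientation corresponding to $\mu_i$ is a $\mathcal P$-tangle. Non-degeneracy assumption: whenever $\tau\in\{0,1\}^m$ has the property that for all $x,y,z\in\{1,\dots,m\}$ there exists a mindset $\mu_i$ with $\tau(x)=\mu_i(x)$, $\tau(y)=\mu_i(y)$ and $\tau(z)=\mu_i(z)$, then $\tau=\mu_j$ for some $j$. *)

theory Defs
  imports "HOL-Probability.Probability"
begin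

text \<open>Population V = {0..<n}; person v belongs to group g v (groups 0..<k).
  Questions are 0..<m. Mindsets mu i :: nat => bool for i < k (True = answer 1).
  A random answer profile is ans :: nat * nat => bool, ans (v,s) = v(s).\<close>

definition answer_pmf ::
  "nat \<Rightarrow> nat \<Rightarrow> (nat \<Rightarrow> nat) \<Rightarrow> (nat \<Rightarrow> nat \<Rightarrow> bool) \<Rightarrow> real \<Rightarrow> (nat \<times> nat \<Rightarrow> bool) pmf" where
  "answer_pmf n m g mu p =
     Pi_pmf ({0..<n} \<times> {0..<m}) False
       (\<lambda>(v, s). map_pmf (\<lambda>flip. if flip then \<not> mu (g v) s else mu (g v) s)
                        (bernoulli_pmf p))"

definition side :: "nat \<Rightarrow> (nat \<times> nat \<Rightarrow> bool) \<Rightarrow> nat \<Rightarrow> bool \<Rightarrow> nat set" where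
  "side n ans s y = {v \<in> {0..<n}. ans (v, s) = y}"

definition is_tangle ::
  "nat \<Rightarrow> nat \<Rightarrow> nat \<Rightarrow> (nat \<times> nat \<Rightarrow> bool) \<Rightarrow> (nat \<Rightarrow> bool) \<Rightarrow> bool" where
  "is_tangle n m a ans tau \<longleftrightarrow>
     (\<forall>x<m. \<forall>y<m. \<forall>z<m.
        card (side n ans x (tau x) \<inter> side n ans y (tau y) \<inter> side n ans z (tau z)) \<ge> a)"

definition non_degenerate :: "nat \<Rightarrow> nat \<Rightarrow> (nat \<Rightarrow> nat \<Rightarrow> bool) \<Rightarrow> bool" where
  "non_degenerate k m mu \<longleftrightarrow>
     (\<forall>tau :: nat \<Rightarrow> bool.
        (\<forall>x<m. \<forall>y<m. \<forall>z<m. \<exists>i<k.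
            tau x = mu i x \<and> tau y = mu i y \<and> tau z = mu i z)
        \<longrightarrow> (\<exists>j<k. \<forall>s<m. tau s = mu j s))"

end

theory Submission
  imports Defs
begin

text \<open>Call a person of group \<open>i\<close> a deviator on question \<open>s\<close> if its answer differs from
  \<open>\<mu>\<^sub>i(s)\<close>. For each group and question the number of deviators is binomially distributed,
  so by Hoeffding's inequality and a union bound over the \<open>k m\<close> pairs, with the claimed
  probability every such number is below a threshold \<open>t\<close>. On that event both claims
  are deterministic: the sides chosen by \<open>\<mu>\<^sub>i\<close> for three questions contain all of \<open>V\<^sub>i\<close> except
  fewer than \<open>3t\<close> deviators, so \<open>\<mu>\<^sub>i\<close> is a tangle if \<open>a + 3t \<le> n/k\<close>. Conversely, if an
  orientation differs from every mindset, non-degeneracy yields three questions on which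
  it agrees with no mindset; everybody in the corresponding triple intersection is then a
  deviator of its own group on one of them, so the intersection has fewer than \<open>k t\<close>
  elements and the orientation is no tangle if \<open>k t \<le> a\<close>.\<close>

definition deviators ::
  "nat \<Rightarrow> (nat \<Rightarrow> nat) \<Rightarrow> (nat \<Rightarrow> nat \<Rightarrow> bool) \<Rightarrow> (nat \<times> nat \<Rightarrow> bool) \<Rightarrow> nat \<Rightarrow> nat \<Rightarrow> nat set"
where
  "deviators n g mu ans i s = {v \<in> {0..<n}. g v = i \<and> ans (v, s) \<noteq> mu i s}"

lemma answer_pmf_count_flips_binomial:
  assumes B: "B \<subseteq> {0..<n} \<times> {0..<m}" and c: "\<forall>(v, s)\<in>B. mu (g v) s = c"
    and p: "p \<in> {0..1}"
  shows "map_pmf (\<lambda>ans. card {x \<in> B. ans x \<noteq> c}) (answer_pmf n m g mu p)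
         = binomial_pmf (card B) p"
proof -
  let ?flip = "\<lambda>b. b \<noteq> c"
  have finB: "finite B" using B by (rule finite_subset) auto
  have "map_pmf (\<lambda>f x. if x \<in> B then f x else False) (answer_pmf n m g mu p)
      = Pi_pmf B False (\<lambda>(v, s). map_pmf (\<lambda>flip. if flip then \<not> mu (g v) s else mu (g v) s)
                                         (bernoulli_pmf p))"
    unfolding answer_pmf_def by (rule Pi_pmf_subset[symmetric]) (use B in auto)
  also have "\<dots> = Pi_pmf B False (\<lambda>_. map_pmf ?flip (bernoulli_pmf p))"
    using c by (intro Pi_pmf_cong map_pmf_cong) auto
  also have "\<dots> = map_pmf (\<lambda>h. ?flip \<circ> h) (Pi_pmf B c (\<lambda>_. bernoulli_pmf p))"
    by (rule Pi_pmf_map) (use finB in auto)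
  finally have restrict:
    "map_pmf (\<lambda>f x. if x \<in> B then f x else False) (answer_pmf n m g mu p)
     = map_pmf (\<lambda>h. ?flip \<circ> h) (Pi_pmf B c (\<lambda>_. bernoulli_pmf p))" .
  have "map_pmf (\<lambda>ans. card {x \<in> B. ans x \<noteq> c}) (answer_pmf n m g mu p)
      = map_pmf (\<lambda>ans. card {x \<in> B. ans x \<noteq> c})
          (map_pmf (\<lambda>f x. if x \<in> B then f x else False) (answer_pmf n m g mu p))"
    by (simp add: pmf.map_comp o_def cong: conj_cong)
  also have "\<dots> = map_pmf (\<lambda>h. card {x \<in> B. h x}) (Pi_pmf B c (\<lambda>_. bernoulli_pmf p))"
    unfolding restrict
    by (simp add: pmf.map_comp o_def, intro map_pmf_cong refl arg_cong[where f = card]) blast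
  also have "\<dots> = binomial_pmf (card B) p"
    by (rule binomial_pmf_altdef'[symmetric]) (use finB p in auto)
  finally show ?thesis .
qed

lemma card_deviators_binomial:
  assumes "s < m" and "p \<in> {0..1}"
  shows "map_pmf (\<lambda>ans. card (deviators n g mu ans i s)) (answer_pmf n m g mu p)
         = binomial_pmf (card {v \<in> {0..<n}. g v = i}) p"
proof -
  define B where "B = {v \<in> {0..<n}. g v = i} \<times> {s}"
  have "deviators n g mu ans i s = fst ` {x \<in> B. ans x \<noteq> mu i s}" for ans
    unfolding deviators_def B_def by force
  then have "card (deviators n g mu ans i s) = card {x \<in> B. ans x \<noteq> mu i s}" for ans
    by (simp add: card_image inj_on_def B_def)
  moreover have "map_pmf (\<lambda>ans. card {x \<in> B. ans x \<noteq> mu i s}) (answer_pmf n m g mu p)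
                 = binomial_pmf (card B) p"
    by (rule answer_pmf_count_flips_binomial) (use assms in \<open>auto simp: B_def\<close>)
  ultimately show ?thesis by (simp add: B_def card_cartesian_product)
qed

lemma prob_card_deviators_ge:
  assumes "s < m" and "p \<in> {0..1}" and "card {v \<in> {0..<n}. g v = i} = N" and "N > 0"
    and "e \<ge> 0"
  shows "measure_pmf.prob (answer_pmf n m g mu p)
           {ans. real N * p + e \<le> real (card (deviators n g mu ans i s))}
         \<le> exp (- 2 * e\<^sup>2 / N)"
proof -
  have "measure_pmf.prob (answer_pmf n m g mu p)
          {ans. real N * p + e \<le> real (card (deviators n g mu ans i s))}
        = measure_pmf.prob (binomial_pmf N p) {x. real x \<ge> real N * p + e}"
    using card_deviators_binomial[of s m p n g mu i, symmetric] assms by (simp add: vimage_def)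
  also have "\<dots> \<le> exp (- 2 * e\<^sup>2 / N)"
    by (rule binomial_distribution.prob_ge) (use assms in \<open>auto simp: binomial_distribution_def\<close>)
  finally show ?thesis .
qed

lemma prob_some_card_deviators_ge:
  assumes "p \<in> {0..1}" and "\<forall>i<k. card {v \<in> {0..<n}. g v = i} = N" and "N > 0"
    and "e \<ge> 0"
  shows "measure_pmf.prob (answer_pmf n m g mu p)
           {ans. \<exists>i<k. \<exists>s<m. real N * p + e \<le> real (card (deviators n g mu ans i s))}
         \<le> real k * real m * exp (- 2 * e\<^sup>2 / N)"
proof -
  define E where "E = (\<lambda>(i, s). {ans. real N * p + e \<le> real (card (deviators n g mu ans i s))})"
  have "{ans. \<exists>i<k. \<exists>s<m. real N * p + e \<le> real (card (deviators n g mu ans i s))}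
        = (\<Union>x\<in>{..<k} \<times> {..<m}. E x)"
    unfolding E_def by auto
  then have "measure_pmf.prob (answer_pmf n m g mu p)
               {ans. \<exists>i<k. \<exists>s<m. real N * p + e \<le> real (card (deviators n g mu ans i s))}
             \<le> (\<Sum>x\<in>{..<k} \<times> {..<m}. measure_pmf.prob (answer_pmf n m g mu p) (E x))"
    by (simp add: measure_pmf.finite_measure_subadditive_finite)
  also have "\<dots> \<le> (\<Sum>x\<in>{..<k} \<times> {..<m}. exp (- 2 * e\<^sup>2 / N))"
  proof (intro sum_mono)
    fix x assume "x \<in> {..<k} \<times> {..<m}"
    then show "measure_pmf.prob (answer_pmf n m g mu p) (E x) \<le> exp (- 2 * e\<^sup>2 / N)"
      using prob_card_deviators_ge[of "snd x" m p n g "fst x" N e mu] assms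
      by (auto simp: E_def split: prod.splits)
  qed
  finally show ?thesis by simp
qed

lemma card_group_le_triple_inter_plus_deviators:
  "card {v \<in> {0..<n}. g v = i}
   \<le> card (side n ans x (mu i x) \<inter> side n ans y (mu i y) \<inter> side n ans z (mu i z))
     + card (deviators n g mu ans i x) + card (deviators n g mu ans i y)
     + card (deviators n g mu ans i z)"
proof -
  let ?S = "side n ans x (mu i x) \<inter> side n ans y (mu i y) \<inter> side n ans z (mu i z)"
  let ?D = "deviators n g mu ans i"
  have "card {v \<in> {0..<n}. g v = i} \<le> card (?S \<union> ?D x \<union> ?D y \<union> ?D z)"
    by (intro card_mono) (auto simp: side_def deviators_def)
  also have "\<dots> \<le> card ?S + card (?D x) + card (?D y) + card (?D z)"
    by (meson add_le_mono card_Un_le le_trans order_refl)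
  finally show ?thesis .
qed

lemma mindset_is_tangle_if_few_deviators:
  assumes "card {v \<in> {0..<n}. g v = i} = N"
    and "\<forall>s<m. real (card (deviators n g mu ans i s)) < t" and "real a + 3 * t \<le> real N"
  shows "is_tangle n m a ans (mu i)"
  unfolding is_tangle_def
proof (intro allI impI)
  fix x y z assume "x < m" "y < m" "z < m"
  let ?S = "side n ans x (mu i x) \<inter> side n ans y (mu i y) \<inter> side n ans z (mu i z)"
  let ?d = "\<lambda>s. real (card (deviators n g mu ans i s))"
  have "real N \<le> real (card ?S) + ?d x + ?d y + ?d z"
    using card_group_le_triple_inter_plus_deviators[of n g i ans x mu y z] assms(1)
    by (simp only: of_nat_add[symmetric] of_nat_le_iff)
  moreover have "?d x < t" "?d y < t" "?d z < t"
    using assms(2) \<open>x < m\<close> \<open>y < m\<close> \<open>z < m\<close> by auto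
  ultimately have "real a < real (card ?S)" using assms(3) by linarith
  then show "a \<le> card ?S" by simp
qed

lemma non_degenerate_separating_triple:
  assumes "non_degenerate k m mu" and "\<forall>i<k. \<exists>s<m. tau s \<noteq> mu i s"
  obtains x y z where "x < m" "y < m" "z < m"
    and "\<forall>i<k. tau x \<noteq> mu i x \<or> tau y \<noteq> mu i y \<or> tau z \<noteq> mu i z"
proof -
  have "\<not> (\<forall>x<m. \<forall>y<m. \<forall>z<m. \<exists>i<k. tau x = mu i x \<and> tau y = mu i y \<and> tau z = mu i z)"
  proof
    assume "\<forall>x<m. \<forall>y<m. \<forall>z<m. \<exists>i<k. tau x = mu i x \<and> tau y = mu i y \<and> tau z = mu i z"
    with assms(1) obtain j where "j < k" "\<forall>s<m. tau s = mu j s"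
      unfolding non_degenerate_def by blast
    with assms(2) show False by blast
  qed
  with that show ?thesis by blast
qed

lemma card_triple_inter_le_deviators:
  assumes "\<forall>v<n. g v < k"
    and "\<forall>i<k. sel i \<in> {x, y, z} \<and> tau (sel i) \<noteq> mu i (sel i)"
  shows "card (side n ans x (tau x) \<inter> side n ans y (tau y) \<inter> side n ans z (tau z))
         \<le> (\<Sum>i<k. card (deviators n g mu ans i (sel i)))"
proof -
  have "side n ans x (tau x) \<inter> side n ans y (tau y) \<inter> side n ans z (tau z)
        \<subseteq> (\<Union>i<k. deviators n g mu ans i (sel i))"
  proof
    fix v assume v: "v \<in> side n ans x (tau x) \<inter> side n ans y (tau y) \<inter> side n ans z (tau z)"
    then have "v < n" by (simp add: side_def)
    with assms(1) have "g v < k" by blast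
    moreover have "ans (v, sel (g v)) = tau (sel (g v))"
      using v assms(2) \<open>g v < k\<close> by (auto simp: side_def)
    ultimately show "v \<in> (\<Union>i<k. deviators n g mu ans i (sel i))"
      using assms(2) \<open>v < n\<close> by (auto simp: deviators_def)
  qed
  then have "card (side n ans x (tau x) \<inter> side n ans y (tau y) \<inter> side n ans z (tau z))
             \<le> card (\<Union>i<k. deviators n g mu ans i (sel i))"
    by (intro card_mono) (auto simp: deviators_def)
  also have "\<dots> \<le> (\<Sum>i<k. card (deviators n g mu ans i (sel i)))"
    by (rule card_UN_le) simp
  finally show ?thesis .
qed

lemma tangle_is_mindset_if_few_deviators:
  assumes "non_degenerate k m mu" and "k > 0" and "\<forall>v<n. g v < k"
    and "\<forall>i<k. \<forall>s<m. real (card (deviators n g mu ans i s)) < t" and "real k * t \<le> real a"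
    and "is_tangle n m a ans tau"
  shows "\<exists>i<k. \<forall>s<m. tau s = mu i s"
proof (rule ccontr)
  assume "\<not> ?thesis"
  then have "\<forall>i<k. \<exists>s<m. tau s \<noteq> mu i s" by blast
  with assms(1) obtain x y z where xyz: "x < m" "y < m" "z < m"
    and sep: "\<forall>i<k. tau x \<noteq> mu i x \<or> tau y \<noteq> mu i y \<or> tau z \<noteq> mu i z"
    by (rule non_degenerate_separating_triple)
  define sel where
    "sel i = (if tau x \<noteq> mu i x then x else if tau y \<noteq> mu i y then y else z)" for i
  have sel: "\<forall>i<k. sel i \<in> {x, y, z} \<and> tau (sel i) \<noteq> mu i (sel i)"
    using sep by (auto simp: sel_def)
  have "real (card (side n ans x (tau x) \<inter> side n ans y (tau y) \<inter> side n ans z (tau z)))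
        \<le> (\<Sum>i<k. real (card (deviators n g mu ans i (sel i))))"
    using card_triple_inter_le_deviators[where tau = tau and mu = mu and ans = ans, OF assms(3) sel]
    by (simp flip: of_nat_sum)
  also have "\<dots> < (\<Sum>i<k. t)"
  proof (rule sum_strict_mono)
    fix i assume "i \<in> {..<k}"
    then have "sel i < m" using sel xyz by auto
    with assms(4) \<open>i \<in> {..<k}\<close> show "real (card (deviators n g mu ans i (sel i))) < t" by simp
  qed (use assms(2) in auto)
  also have "\<dots> \<le> real a" using assms(5) by simp
  finally have "card (side n ans x (tau x) \<inter> side n ans y (tau y) \<inter> side n ans z (tau z)) < a"
    by simp
  with assms(6) xyz show False unfolding is_tangle_def by (meson not_le)
qed

lemma prob_some_mindset_not_tangle_le:
  assumes "p \<in> {0..1}" and "\<forall>i<k. card {v \<in> {0..<n}. g v = i} = N" and "N > 0"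
    and "e \<ge> 0" and "real a + 3 * (real N * p + e) \<le> real N"
  shows "measure_pmf.prob (answer_pmf n m g mu p) {ans. \<exists>i<k. \<not> is_tangle n m a ans (mu i)}
         \<le> real k * real m * exp (- 2 * e\<^sup>2 / N)"
proof -
  let ?many_deviators =
    "{ans. \<exists>i<k. \<exists>s<m. real N * p + e \<le> real (card (deviators n g mu ans i s))}"
  have "{ans. \<exists>i<k. \<not> is_tangle n m a ans (mu i)} \<subseteq> ?many_deviators"
  proof
    fix ans assume "ans \<in> {ans. \<exists>i<k. \<not> is_tangle n m a ans (mu i)}"
    then obtain i where "i < k" and "\<not> is_tangle n m a ans (mu i)" by blast
    then have "\<not> (\<forall>s<m. real (card (deviators n g mu ans i s)) < real N * p + e)"
      using mindset_is_tangle_if_few_deviators[of n g i N m mu ans "real N * p + e" a] assms(2,5)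
      by blast
    with \<open>i < k\<close> show "ans \<in> ?many_deviators"
      by (auto simp: not_less)
  qed
  then have "measure_pmf.prob (answer_pmf n m g mu p) {ans. \<exists>i<k. \<not> is_tangle n m a ans (mu i)}
             \<le> measure_pmf.prob (answer_pmf n m g mu p) ?many_deviators"
    by (rule measure_pmf.finite_measure_mono) simp
  also have "\<dots> \<le> real k * real m * exp (- 2 * e\<^sup>2 / N)"
    by (rule prob_some_card_deviators_ge) (use assms in auto)
  finally show ?thesis .
qed

lemma prob_spurious_tangle_le:
  assumes "non_degenerate k m mu" and "k > 0" and "\<forall>v<n. g v < k"
    and "p \<in> {0..1}" and "\<forall>i<k. card {v \<in> {0..<n}. g v = i} = N" and "N > 0"
    and "e \<ge> 0" and "real k * (real N * p + e) \<le> real a"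
  shows "measure_pmf.prob (answer_pmf n m g mu p)
           {ans. \<exists>tau. is_tangle n m a ans tau \<and> (\<forall>i<k. \<exists>s<m. tau s \<noteq> mu i s)}
         \<le> real k * real m * exp (- 2 * e\<^sup>2 / N)"
proof -
  let ?many_deviators =
    "{ans. \<exists>i<k. \<exists>s<m. real N * p + e \<le> real (card (deviators n g mu ans i s))}"
  have "{ans. \<exists>tau. is_tangle n m a ans tau \<and> (\<forall>i<k. \<exists>s<m. tau s \<noteq> mu i s)}
        \<subseteq> ?many_deviators"
  proof
    fix ans assume "ans \<in> {ans. \<exists>tau. is_tangle n m a ans tau \<and> (\<forall>i<k. \<exists>s<m. tau s \<noteq> mu i s)}"
    then obtain tau where "is_tangle n m a ans tau" and "\<forall>i<k. \<exists>s<m. tau s \<noteq> mu i s" by blast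
    then have "\<not> (\<forall>i<k. \<forall>s<m. real (card (deviators n g mu ans i s)) < real N * p + e)"
      using tangle_is_mindset_if_few_deviators[where tau = tau, OF assms(1-3) _ assms(8)] by blast
    then show "ans \<in> ?many_deviators"
      by (auto simp: not_less)
  qed
  then have "measure_pmf.prob (answer_pmf n m g mu p)
               {ans. \<exists>tau. is_tangle n m a ans tau \<and> (\<forall>i<k. \<exists>s<m. tau s \<noteq> mu i s)}
             \<le> measure_pmf.prob (answer_pmf n m g mu p) ?many_deviators"
    by (rule measure_pmf.finite_measure_mono) simp
  also have "\<dots> \<le> real k * real m * exp (- 2 * e\<^sup>2 / N)"
    by (rule prob_some_card_deviators_ge) (use assms in auto)
  finally show ?thesis .
qed

theorem theorem1:
  fixes n m k a :: nat and p :: real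
    and g :: "nat \<Rightarrow> nat" and mu :: "nat \<Rightarrow> nat \<Rightarrow> bool"
  assumes "n > 0" and "m > 0" and "k > 0" and "k dvd n"
    and "0 < p" and "p < 1/2"
    and "\<forall>v<n. g v < k"
    and "\<forall>i<k. card {v \<in> {0..<n}. g v = i} = n div k"
    and "p < 1 / (real k + 3)"
    and "p * real n < real a" and "real a < (1 - 3 * p) * real n / real k"
  shows "measure_pmf.prob (answer_pmf n m g mu p)
           {ans. \<exists>i<k. \<not> is_tangle n m a ans (mu i)}
         \<le> real k * real m *
            exp (- 2 * real n * (real k * real a / real n - 1 + 3 * p)^2 / (9 * real k))
       \<and> (non_degenerate k m mu \<longrightarrow>
         measure_pmf.prob (answer_pmf n m g mu p)
           {ans. \<exists>tau. is_tangle n m a ans tau \<and> (\<forall>i<k. \<exists>s<m. tau s \<noteq> mu i s)}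
         \<le> real k * real m * exp (- 2 * real n * (real a / real n - p)^2 / real k))"
proof -
  \<comment> \<open>The hypothesis \<open>p < 1 / (k + 3)\<close> only makes the range of \<open>a\<close> nonempty.\<close>
  define N where "N = n div k"
  have n: "real n = real k * real N"
    using assms(4) by (simp add: N_def flip: of_nat_mult)
  have "N > 0" using assms(1) n by (cases N) auto
  have groups: "\<forall>i<k. card {v \<in> {0..<n}. g v = i} = N" using assms(8) by (simp add: N_def)
  have p: "p \<in> {0..1}" using assms(5,6) by simp
  define e1 where "e1 = (real N * (1 - 3 * p) - real a) / 3"
  have "real a < (1 - 3 * p) * real N" using assms(3,11) by (simp add: n)
  then have e1: "e1 \<ge> 0" "real a + 3 * (real N * p + e1) \<le> real N"
    by (simp_all add: e1_def field_simps)
  have exp1: "exp (- 2 * e1\<^sup>2 / real N)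
      = exp (- 2 * real n * (real k * real a / real n - 1 + 3 * p)^2 / (9 * real k))"
    using assms(3) \<open>N > 0\<close> by (simp add: n e1_def field_simps power2_eq_square)
  define e2 where "e2 = (real a - p * real n) / real k"
  have e2: "e2 \<ge> 0" "real k * (real N * p + e2) \<le> real a"
    using assms(3,10) by (simp_all add: e2_def n field_simps)
  have exp2: "exp (- 2 * e2\<^sup>2 / real N) = exp (- 2 * real n * (real a / real n - p)^2 / real k)"
    using assms(3) \<open>N > 0\<close> by (simp add: n e2_def field_simps power2_eq_square)
  show ?thesis
    using prob_some_mindset_not_tangle_le[OF p groups \<open>N > 0\<close> e1, of m mu]
      prob_spurious_tangle_le[OF _ assms(3,7) p groups \<open>N > 0\<close> e2]
    unfolding exp1 exp2 by blast
qed

end
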